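(* Let $q$ be a complex number with $|q|<1$. Then \[ \sum_{n\geq 0} q^{4n+1} (q^{4n+4};q^4)_\infty (q;q)_{2n} =\frac{2q^2(q^4;q^4)_\infty}{1+q^3}+ \frac{q(1-q) (q;q)_\infty}{1+q^3}, \] and \[ (1+q^3) \sum_{n\geq 0} \frac{(-q^2;q^2)_n\, q^{2n+1}}{(q;q^2)_{n}} = \frac{q^2(q^4;q^4)_\infty}{(q;q)_\infty}-q^2+q . \]
   Context: For a complex number $a$ and $|q|<1$: $(a;q)_0=1$, $(a;q)_n=\prod_{j=0}^{n-1}(1-aq^j)$ for integers $n\ge 1$, and $(a;q)_\infty=\prod_{j=0}^{\infty}(1-aq^j)$. *)

theory Defs
  imports "HOL-Analysis.Analysis"
begin

definition qpoch :: "complex \<Rightarrow> complex \<Rightarrow> nat \<Rightarrow> complex" where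
  "qpoch a q n = (\<Prod>j<n. 1 - a * q ^ j)"

definition qpoch_inf :: "complex \<Rightarrow> complex \<Rightarrow> complex" where
  "qpoch_inf a q = (\<Prod>j. 1 - a * q ^ j)"

end

theory Submission
  imports Defs
begin

(* The sequence s n = (q;q^2)_n / (-q^2;q^2)_n satisfies
   s (n+1) (1 + q^(2n+2)) = s n (1 - q^(2n+1)) and tends to (q;q)_inf / (q^4;q^4)_inf.
   Summing this recurrence against the weights q^(2n) and q^(4n) gives two linear relations
   between the limit, G = sum s n q^(2n) and W = sum s n q^(4n); eliminating G yields the first
   identity, because the n-th term of the first series is (q^4;q^4)_inf s n q^(4n+1).
   The second identity is the same argument applied to 1 / s n. *)

lemma qpoch_0 [simp]: "qpoch a x 0 = 1"
  by (simp add: qpoch_def)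

lemma qpoch_Suc: "qpoch a x (Suc n) = qpoch a x n * (1 - a * x ^ n)"
  by (simp add: qpoch_def)

lemma qpoch_add: "qpoch a x (m + n) = qpoch a x m * qpoch (a * x ^ m) x n"
  by (induction n) (simp_all add: qpoch_Suc power_add mult_ac)

lemma qpoch_double: "qpoch a x (2 * n) = qpoch a (x\<^sup>2) n * qpoch (a * x) (x\<^sup>2) n"
  by (induction n) (simp_all add: qpoch_Suc power_mult[symmetric] mult_ac)

lemma qpoch_square: "qpoch (a\<^sup>2) (x\<^sup>2) n = qpoch a x n * qpoch (- a) x n"
proof (induction n)
  case (Suc n)
  have "(x\<^sup>2) ^ n = (x ^ n)\<^sup>2"
    by (metis power_mult mult.commute)
  then have "1 - a\<^sup>2 * (x\<^sup>2) ^ n = (1 - a * x ^ n) * (1 - (- a) * x ^ n)"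
    by (simp add: algebra_simps power2_eq_square)
  then show ?case
    using Suc by (simp add: qpoch_Suc mult_ac)
qed simp

lemma qpoch_factor_nonzero:
  fixes a x :: complex
  assumes "norm a < 1" "norm x \<le> 1"
  shows "1 - a * x ^ j \<noteq> 0"
proof -
  have "norm (a * x ^ j) \<le> norm a"
    using assms by (simp add: norm_mult norm_power mult_left_le power_le_one)
  then have "a * x ^ j \<noteq> 1"
    using assms by auto
  then show ?thesis
    by simp
qed

lemma qpoch_nonzero: "norm a < 1 \<Longrightarrow> norm x \<le> 1 \<Longrightarrow> qpoch a x n \<noteq> 0"
  unfolding qpoch_def using qpoch_factor_nonzero by simp

lemma convergent_prod_qpoch:
  fixes a x :: complex
  assumes "norm x < 1"
  shows "convergent_prod (\<lambda>j. 1 - a * x ^ j)"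
proof (rule abs_convergent_prod_imp_convergent_prod, rule summable_imp_abs_convergent_prod)
  show "summable (\<lambda>j. norm (1 - a * x ^ j - 1))"
    using summable_mult[OF summable_geometric[of "norm x"], of "norm a"] assms
    by (simp add: norm_mult norm_power)
qed

lemma qpoch_tendsto:
  assumes "norm x < 1"
  shows "qpoch a x \<longlonglongrightarrow> qpoch_inf a x"
proof -
  have "(\<lambda>n. qpoch a x (Suc n)) \<longlonglongrightarrow> qpoch_inf a x"
    using convergent_prod_LIMSEQ[OF convergent_prod_qpoch[OF assms]]
    by (simp add: qpoch_def qpoch_inf_def lessThan_Suc_atMost)
  then show ?thesis
    by (rule LIMSEQ_imp_Suc)
qed

lemma qpoch_inf_nonzero: "norm a < 1 \<Longrightarrow> norm x < 1 \<Longrightarrow> qpoch_inf a x \<noteq> 0"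
  unfolding qpoch_inf_def
  by (intro prodinf_nonzero convergent_prod_qpoch qpoch_factor_nonzero) auto

lemma qpoch_inf_split:
  assumes "norm x < 1"
  shows "qpoch_inf a x = qpoch a x m * qpoch_inf (a * x ^ m) x"
proof -
  have "(\<lambda>n. qpoch a x (m + n)) \<longlonglongrightarrow> qpoch_inf a x"
    using LIMSEQ_ignore_initial_segment[OF qpoch_tendsto[OF assms], where k = m]
    by (simp add: add.commute)
  moreover have "(\<lambda>n. qpoch a x (m + n)) \<longlonglongrightarrow> qpoch a x m * qpoch_inf (a * x ^ m) x"
    unfolding qpoch_add by (intro tendsto_mult tendsto_const qpoch_tendsto assms)
  ultimately show ?thesis
    by (rule LIMSEQ_unique)
qed

lemma summable_convergent_times_power:
  fixes u :: "nat \<Rightarrow> 'a::{real_normed_field, banach}"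
  assumes "convergent u" "norm z < 1"
  shows "summable (\<lambda>n. u n * z ^ n)"
proof -
  obtain K where "\<And>n. norm (u n) \<le> K"
    using convergent_imp_Bseq[OF assms(1)] by (auto simp: Bseq_def)
  then have "norm (u n * z ^ n) \<le> K * norm z ^ n" for n
    by (simp add: norm_mult norm_power mult_right_mono)
  moreover have "summable (\<lambda>n. K * norm z ^ n)"
    using assms(2) by (intro summable_mult summable_geometric) simp
  ultimately show ?thesis
    by (rule summable_comparison_test'[rotated])
qed

text \<open>For \<open>u n = (a;p)\<^sub>n / (b;p)\<^sub>n\<close> and \<open>U z = (\<Sum>n. u n * z ^ n)\<close> the next two lemmas are
  the \<open>q\<close>-difference equation \<open>p (1 - z) U z = p - b + (b - a p z) U (p z)\<close> and its
  Abelian limit \<open>z \<rightarrow> 1\<close>, where \<open>(1 - z) U z\<close> becomes \<open>lim u\<close>.\<close>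

lemma ratio_recurrence_power_series_eq:
  fixes u :: "nat \<Rightarrow> 'a::real_normed_field"
  assumes rec: "\<And>n. u (Suc n) * (1 - b * p ^ n) = u n * (1 - a * p ^ n)"
    and U: "(\<lambda>n. u n * z ^ n) sums U" and V: "(\<lambda>n. u n * (p * z) ^ n) sums V"
  shows "p * (1 - z) * U = (p - b) * u 0 + (b - a * p * z) * V"
proof -
  have termwise: "p * (u (Suc n) * z ^ Suc n) - b * (u (Suc n) * (p * z) ^ Suc n)
      = p * z * (u n * z ^ n) - a * p * z * (u n * (p * z) ^ n)" for n
  proof -
    have "p * (u (Suc n) * z ^ Suc n) - b * (u (Suc n) * (p * z) ^ Suc n)
        = p * z ^ Suc n * (u (Suc n) * (1 - b * p ^ n))"
      by (simp add: power_mult_distrib algebra_simps)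
    also have "\<dots> = p * z ^ Suc n * (u n * (1 - a * p ^ n))"
      by (simp only: rec)
    finally show ?thesis
      by (simp add: power_mult_distrib algebra_simps)
  qed
  have "(\<lambda>n. p * (u (Suc n) * z ^ Suc n) - b * (u (Suc n) * (p * z) ^ Suc n))
          sums (p * (U - u 0) - b * (V - u 0))"
    using sums_Suc_iff[of "\<lambda>n. u n * z ^ n" "U - u 0"]
      sums_Suc_iff[of "\<lambda>n. u n * (p * z) ^ n" "V - u 0"] U V
    by (intro sums_diff sums_mult) simp_all
  then have "(\<lambda>n. p * z * (u n * z ^ n) - a * p * z * (u n * (p * z) ^ n))
          sums (p * (U - u 0) - b * (V - u 0))"
    by (simp only: termwise)
  moreover have "(\<lambda>n. p * z * (u n * z ^ n) - a * p * z * (u n * (p * z) ^ n))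
          sums (p * z * U - a * p * z * V)"
    using U V by (intro sums_diff sums_mult)
  ultimately show ?thesis
    by (auto simp: algebra_simps dest: sums_unique2)
qed

lemma ratio_recurrence_limit_eq:
  fixes u :: "nat \<Rightarrow> 'a::real_normed_field"
  assumes rec: "\<And>n. u (Suc n) * (1 - b * p ^ n) = u n * (1 - a * p ^ n)"
    and L: "u \<longlonglongrightarrow> L" and V: "(\<lambda>n. u n * p ^ n) sums V"
  shows "p * L = (p - b) * u 0 + (b - a * p) * V"
proof -
  have termwise: "p * (u (Suc n) - u n) = b * (u (Suc n) * p ^ Suc n) - a * p * (u n * p ^ n)" for n
    using arg_cong[OF rec[of n], of "\<lambda>x. p * x"] by (simp add: algebra_simps)
  have "(\<lambda>n. p * (u (Suc n) - u n)) sums (p * (L - u 0))"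
    using telescope_sums[OF L] by (rule sums_mult)
  then have "(\<lambda>n. b * (u (Suc n) * p ^ Suc n) - a * p * (u n * p ^ n)) sums (p * (L - u 0))"
    by (simp only: termwise)
  moreover have "(\<lambda>n. b * (u (Suc n) * p ^ Suc n) - a * p * (u n * p ^ n))
          sums (b * (V - u 0) - a * p * V)"
    using sums_Suc_iff[of "\<lambda>n. u n * p ^ n" "V - u 0"] V by (intro sums_diff sums_mult) simp_all
  ultimately show ?thesis
    by (auto simp: algebra_simps dest: sums_unique2)
qed

definition qpoch_ratio :: "complex \<Rightarrow> complex \<Rightarrow> complex \<Rightarrow> nat \<Rightarrow> complex" where
  "qpoch_ratio a b x n = qpoch a x n / qpoch b x n"

lemma qpoch_ratio_0 [simp]: "qpoch_ratio a b x 0 = 1"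
  by (simp add: qpoch_ratio_def)

lemma qpoch_ratio_Suc:
  assumes "norm b < 1" "norm x \<le> 1"
  shows "qpoch_ratio a b x (Suc n) * (1 - b * x ^ n) = qpoch_ratio a b x n * (1 - a * x ^ n)"
  using qpoch_nonzero[OF assms] qpoch_factor_nonzero[OF assms]
  by (simp add: qpoch_ratio_def qpoch_Suc)

lemma qpoch_ratio_eq_double_over_square:
  assumes "norm q < 1"
  shows "qpoch_ratio q (- (q\<^sup>2)) (q\<^sup>2) n = qpoch q q (2 * n) / qpoch (q ^ 4) (q ^ 4) n"
proof -
  have "norm (q\<^sup>2) < 1"
    using assms by (simp add: norm_power power_less_one_iff)
  then have "qpoch (q\<^sup>2) (q\<^sup>2) n \<noteq> 0"
    by (simp add: qpoch_nonzero)
  moreover have "qpoch q q (2 * n) = qpoch q (q\<^sup>2) n * qpoch (q\<^sup>2) (q\<^sup>2) n"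
    using qpoch_double[of q q n] by (simp add: power2_eq_square)
  moreover have "qpoch (q ^ 4) (q ^ 4) n = qpoch (q\<^sup>2) (q\<^sup>2) n * qpoch (- (q\<^sup>2)) (q\<^sup>2) n"
    using qpoch_square[of "q\<^sup>2" "q\<^sup>2" n] by (simp flip: power_mult)
  ultimately show ?thesis
    by (simp add: qpoch_ratio_def)
qed

lemma qpoch_ratio_tendsto_qpoch_inf_quotient:
  assumes "norm q < 1"
  shows "qpoch_ratio q (- (q\<^sup>2)) (q\<^sup>2) \<longlonglongrightarrow> qpoch_inf q q / qpoch_inf (q ^ 4) (q ^ 4)"
proof -
  have q4: "norm (q ^ 4) < 1"
    using assms by (simp add: norm_power power_less_one_iff)
  have "(\<lambda>n. qpoch q q (2 * n)) \<longlonglongrightarrow> qpoch_inf q q"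
    using LIMSEQ_subseq_LIMSEQ[OF qpoch_tendsto[OF assms], of "\<lambda>n. 2 * n"]
    by (simp add: strict_mono_def o_def)
  then show ?thesis
    unfolding qpoch_ratio_eq_double_over_square[OF assms]
    by (intro tendsto_divide qpoch_tendsto q4 qpoch_inf_nonzero)
qed

lemma qpoch_inf_tail_times_qpoch_double:
  assumes "norm q < 1"
  shows "q ^ (4 * n + 1) * qpoch_inf (q ^ (4 * n + 4)) (q ^ 4) * qpoch q q (2 * n)
    = qpoch_inf (q ^ 4) (q ^ 4) * (qpoch_ratio q (- (q\<^sup>2)) (q\<^sup>2) n * q ^ (4 * n + 1))"
proof -
  have q4: "norm (q ^ 4) < 1"
    using assms by (simp add: norm_power power_less_one_iff)
  have "q ^ 4 * (q ^ 4) ^ n = q ^ (4 * n + 4)"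
    by (simp add: power_add mult.commute flip: power_mult)
  then have "qpoch_inf (q ^ 4) (q ^ 4) = qpoch (q ^ 4) (q ^ 4) n * qpoch_inf (q ^ (4 * n + 4)) (q ^ 4)"
    using qpoch_inf_split[OF q4, of "q ^ 4" n] by simp
  moreover have "qpoch (q ^ 4) (q ^ 4) n \<noteq> 0"
    using q4 by (simp add: qpoch_nonzero)
  ultimately show ?thesis
    unfolding qpoch_ratio_eq_double_over_square[OF assms] by simp
qed

lemma one_plus_cube_nonzero:
  fixes q :: complex
  assumes "norm q < 1"
  shows "1 + q ^ 3 \<noteq> 0"
proof
  assume "1 + q ^ 3 = 0"
  then have "norm (q ^ 3) = 1"
    by (simp add: add_eq_0_iff)
  moreover have "norm (q ^ 3) < 1"
    using assms by (simp add: norm_power power_less_one_iff)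
  ultimately show False
    by simp
qed

lemma qpoch_ratio_series_4n_plus_1_sums:
  assumes q: "norm q < 1"
  defines "L \<equiv> qpoch_inf q q / qpoch_inf (q ^ 4) (q ^ 4)"
  shows "(\<lambda>n. qpoch_ratio q (- (q\<^sup>2)) (q\<^sup>2) n * q ^ (4 * n + 1))
    sums ((2 * q\<^sup>2 + q * (1 - q) * L) / (1 + q ^ 3))"
proof (cases "q = 0")
  case False
  define s where "s = qpoch_ratio q (- (q\<^sup>2)) (q\<^sup>2)"
  define G where "G = (\<Sum>n. s n * (q\<^sup>2) ^ n)"
  define W where "W = (\<Sum>n. s n * (q\<^sup>2 * q\<^sup>2) ^ n)"
  have q2: "norm (q\<^sup>2) < 1" and "norm (- (q\<^sup>2)) < 1" and q4: "norm (q\<^sup>2 * q\<^sup>2) < 1"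
    using q by (simp_all add: norm_power power_less_one_iff flip: power_add)
  then have rec: "s (Suc n) * (1 - (- (q\<^sup>2)) * (q\<^sup>2) ^ n) = s n * (1 - q * (q\<^sup>2) ^ n)" for n
    unfolding s_def by (intro qpoch_ratio_Suc) simp_all
  have s0: "s 0 = 1"
    by (simp add: s_def)
  have lim: "s \<longlonglongrightarrow> L"
    unfolding s_def L_def using q by (rule qpoch_ratio_tendsto_qpoch_inf_quotient)
  then have "convergent s"
    by (auto simp: convergent_def)
  then have G_sums: "(\<lambda>n. s n * (q\<^sup>2) ^ n) sums G"
    and W_sums: "(\<lambda>n. s n * (q\<^sup>2 * q\<^sup>2) ^ n) sums W"
    unfolding G_def W_def using q2 q4 by (auto intro!: summable_sums summable_convergent_times_power)
  have "q\<^sup>2 * ((1 + q) * G) = q\<^sup>2 * (2 - L)"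
    using ratio_recurrence_limit_eq[OF rec lim G_sums] unfolding s0 by algebra
  then have E1: "(1 + q) * G = 2 - L"
    using False by simp
  have "q\<^sup>2 * ((1 + q ^ 3) * W) = q\<^sup>2 * (2 - (1 - q\<^sup>2) * G)"
    using ratio_recurrence_power_series_eq[OF rec G_sums W_sums] unfolding s0 by algebra
  then have E2: "(1 + q ^ 3) * W = 2 - (1 - q\<^sup>2) * G"
    using False by simp
  have "(1 + q ^ 3) * (q * W) = q * (2 - (1 - q) * ((1 + q) * G))"
    using E2 by algebra
  also have "\<dots> = 2 * q\<^sup>2 + q * (1 - q) * L"
    using E1 by algebra
  finally have sum_eq: "q * W = (2 * q\<^sup>2 + q * (1 - q) * L) / (1 + q ^ 3)"
    using one_plus_cube_nonzero[OF q] by (simp add: eq_divide_eq mult.commute)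
  have "(q\<^sup>2 * q\<^sup>2) ^ n = q ^ (4 * n)" for n
    by (simp add: power_mult flip: power_add)
  then have termwise: "s n * q ^ (4 * n + 1) = q * (s n * (q\<^sup>2 * q\<^sup>2) ^ n)" for n
    by simp
  have "(\<lambda>n. s n * q ^ (4 * n + 1)) sums ((2 * q\<^sup>2 + q * (1 - q) * L) / (1 + q ^ 3))"
    using sums_mult[OF W_sums, of q] by (simp only: termwise sum_eq)
  then show ?thesis
    unfolding s_def .
qed simp

lemma qpoch_ratio_series_2n_plus_1_sums:
  assumes q: "norm q < 1"
  defines "L \<equiv> qpoch_inf (q ^ 4) (q ^ 4) / qpoch_inf q q"
  shows "(\<lambda>n. qpoch_ratio (- (q\<^sup>2)) q (q\<^sup>2) n * q ^ (2 * n + 1))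
    sums ((q\<^sup>2 * L - q\<^sup>2 + q) / (1 + q ^ 3))"
proof -
  define t where "t = qpoch_ratio (- (q\<^sup>2)) q (q\<^sup>2)"
  define T where "T = (\<Sum>n. t n * (q\<^sup>2) ^ n)"
  have q2: "norm (q\<^sup>2) < 1" and q4: "norm (q ^ 4) < 1"
    using q by (simp_all add: norm_power power_less_one_iff)
  then have rec: "t (Suc n) * (1 - q * (q\<^sup>2) ^ n) = t n * (1 - (- (q\<^sup>2)) * (q\<^sup>2) ^ n)" for n
    unfolding t_def using q by (intro qpoch_ratio_Suc) simp_all
  have t0: "t 0 = 1"
    by (simp add: t_def)
  have "(\<lambda>n. inverse (qpoch_ratio q (- (q\<^sup>2)) (q\<^sup>2) n)) \<longlonglongrightarrow> L"
    using tendsto_inverse[OF qpoch_ratio_tendsto_qpoch_inf_quotient[OF q]] q q4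
    by (simp add: L_def qpoch_inf_nonzero)
  moreover have "t = (\<lambda>n. inverse (qpoch_ratio q (- (q\<^sup>2)) (q\<^sup>2) n))"
    by (simp add: t_def qpoch_ratio_def fun_eq_iff)
  ultimately have lim: "t \<longlonglongrightarrow> L"
    by simp
  then have "convergent t"
    by (auto simp: convergent_def)
  then have T_sums: "(\<lambda>n. t n * (q\<^sup>2) ^ n) sums T"
    unfolding T_def using q2 by (auto intro!: summable_sums summable_convergent_times_power)
  have "(1 + q ^ 3) * (q * T) = q\<^sup>2 * L - q\<^sup>2 + q"
    using ratio_recurrence_limit_eq[OF rec lim T_sums] unfolding t0 by algebra
  then have sum_eq: "q * T = (q\<^sup>2 * L - q\<^sup>2 + q) / (1 + q ^ 3)"
    using one_plus_cube_nonzero[OF q] by (simp add: eq_divide_eq mult.commute)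
  have termwise: "t n * q ^ (2 * n + 1) = q * (t n * (q\<^sup>2) ^ n)" for n
    by (simp add: power_mult)
  have "(\<lambda>n. t n * q ^ (2 * n + 1)) sums ((q\<^sup>2 * L - q\<^sup>2 + q) / (1 + q ^ 3))"
    using sums_mult[OF T_sums, of q] by (simp only: termwise sum_eq)
  then show ?thesis
    unfolding t_def .
qed

lemma qpoch_inf_tail_series_sums:
  assumes "norm q < 1"
  defines "A \<equiv> qpoch_inf (q ^ 4) (q ^ 4)" and "Q \<equiv> qpoch_inf q q"
  shows "(\<lambda>n. q ^ (4 * n + 1) * qpoch_inf (q ^ (4 * n + 4)) (q ^ 4) * qpoch q q (2 * n))
    sums (2 * q\<^sup>2 * A / (1 + q ^ 3) + q * (1 - q) * Q / (1 + q ^ 3))"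
proof -
  have "norm (q ^ 4) < 1"
    using assms by (simp add: norm_power power_less_one_iff)
  then have "A \<noteq> 0"
    unfolding A_def by (simp add: qpoch_inf_nonzero)
  then have "A * (2 * q\<^sup>2 + q * (1 - q) * (Q / A)) = 2 * q\<^sup>2 * A + q * (1 - q) * Q"
    by (simp add: field_simps)
  then have "A * ((2 * q\<^sup>2 + q * (1 - q) * (Q / A)) / (1 + q ^ 3))
      = 2 * q\<^sup>2 * A / (1 + q ^ 3) + q * (1 - q) * Q / (1 + q ^ 3)"
    by (simp flip: add_divide_distrib)
  then show ?thesis
    using sums_mult[OF qpoch_ratio_series_4n_plus_1_sums[OF assms(1)], of A]
    unfolding A_def Q_def by (simp only: qpoch_inf_tail_times_qpoch_double[OF assms(1)])
qed

theorem theorem3: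
  fixes q :: complex
  assumes "norm q < 1"
  shows "(\<Sum>n. q ^ (4*n+1) * qpoch_inf (q ^ (4*n+4)) (q ^ 4) * qpoch q q (2*n))
           = 2 * q^2 * qpoch_inf (q^4) (q^4) / (1 + q^3) + q * (1 - q) * qpoch_inf q q / (1 + q^3)
         \<and> (1 + q^3) * (\<Sum>n. qpoch (- (q^2)) (q^2) n * q ^ (2*n+1) / qpoch q (q^2) n)
           = q^2 * qpoch_inf (q^4) (q^4) / qpoch_inf q q - q^2 + q"
proof
  show "(\<Sum>n. q ^ (4*n+1) * qpoch_inf (q ^ (4*n+4)) (q ^ 4) * qpoch q q (2*n))
      = 2 * q^2 * qpoch_inf (q^4) (q^4) / (1 + q^3) + q * (1 - q) * qpoch_inf q q / (1 + q^3)"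
    using qpoch_inf_tail_series_sums[OF assms] by (rule sums_unique[symmetric])
next
  have "qpoch (- (q\<^sup>2)) (q\<^sup>2) n * q ^ (2*n+1) / qpoch q (q\<^sup>2) n
      = qpoch_ratio (- (q\<^sup>2)) q (q\<^sup>2) n * q ^ (2 * n + 1)" for n
    by (simp add: qpoch_ratio_def)
  then show "(1 + q^3) * (\<Sum>n. qpoch (- (q^2)) (q^2) n * q ^ (2*n+1) / qpoch q (q^2) n)
      = q^2 * qpoch_inf (q^4) (q^4) / qpoch_inf q q - q^2 + q"
    using sums_unique[OF qpoch_ratio_series_2n_plus_1_sums[OF assms], symmetric] one_plus_cube_nonzero[OF assms]
    by simp
qed

end
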